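(* If $G$ is a hypo-unique domination graph, then $b(G)\leq \delta(G)+1$.
   Context: All graphs are finite, simple and undirected. A set $D\subseteq V(G)$ is dominating if every vertex of $G$ not in $D$ has a neighbor in $D$; $\gamma(G)$ is the minimum size of a dominating set, and a dominating set of size $\gamma(G)$ is a $\gamma$-set. $G$ is a hypo-unique domination graph if $G$ has at least two $\gamma$-sets but for every $v\in V(G)$ the graph $G-v$ has exactly one $\gamma$-set. The bondage number $b(G)$ of a graph with at least one edge is the minimum number of edges whose removal from $G$ yields a graph with domination number larger than $\gamma(G)$. $\delta(G)$ is the minimum degree. *)

theory Defs
  imports Main
begin

definition simple_graph :: "'a set \<Rightarrow> 'a set set \<Rightarrow> bool" where
  "simple_graph V E \<longleftrightarrow> finite V \<and> (\<forall>e\<in>E. \<exists>u v. u \<in> V \<and> v \<in> V \<and> u \<noteq> v \<and> e = {u, v})"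

definition dominating :: "'a set \<Rightarrow> 'a set set \<Rightarrow> 'a set \<Rightarrow> bool" where
  "dominating V E D \<longleftrightarrow> D \<subseteq> V \<and> (\<forall>v\<in>V - D. \<exists>u\<in>D. {u, v} \<in> E)"

definition domination_number :: "'a set \<Rightarrow> 'a set set \<Rightarrow> nat" where
  "domination_number V E = (LEAST k. \<exists>D. dominating V E D \<and> card D = k)"

definition gamma_sets :: "'a set \<Rightarrow> 'a set set \<Rightarrow> 'a set set" where
  "gamma_sets V E = {D. dominating V E D \<and> card D = domination_number V E}"

definition delete_vertex :: "'a set \<Rightarrow> 'a set set \<Rightarrow> 'a \<Rightarrow> 'a set \<times> 'a set set" where
  "delete_vertex V E v = (V - {v}, {e \<in> E. v \<notin> e})"

definition hypo_unique_domination :: "'a set \<Rightarrow> 'a set set \<Rightarrow> bool" where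
  "hypo_unique_domination V E \<longleftrightarrow>
     2 \<le> card (gamma_sets V E) \<and>
     (\<forall>v\<in>V. card (gamma_sets (fst (delete_vertex V E v)) (snd (delete_vertex V E v))) = 1)"

definition bondage_number :: "'a set \<Rightarrow> 'a set set \<Rightarrow> nat" where
  "bondage_number V E =
     (LEAST k. \<exists>F. F \<subseteq> E \<and> card F = k \<and> domination_number V (E - F) > domination_number V E)"

definition degree :: "'a set set \<Rightarrow> 'a \<Rightarrow> nat" where
  "degree E v = card {e \<in> E. v \<in> e}"

definition min_degree :: "'a set \<Rightarrow> 'a set set \<Rightarrow> nat" where
  "min_degree V E = Min (degree E ` V)"

end

theory Submission
  imports Defs
begin

text \<open>Let \<open>v\<close> have minimum degree and let \<open>D\<close> be the unique \<open>\<gamma>\<close>-set of \<open>G - v\<close>.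
  Deleting the \<open>\<delta>(G)\<close> edges at \<open>v\<close> isolates \<open>v\<close>, which raises the domination number to
  \<open>|D| + 1\<close>. Since \<open>\<gamma>(G) \<le> |D| + 1\<close>, either this already exceeds \<open>\<gamma>(G)\<close>, or \<open>\<gamma>(G) = |D| + 1\<close>.
  In the latter case \<open>D \<noteq> V - {v}\<close> (otherwise \<open>V\<close> would be the only \<open>\<gamma>\<close>-set of \<open>G\<close>), and
  uniqueness of \<open>D\<close> forces some \<open>u \<in> D\<close> to have a private neighbour \<open>w\<close>; deleting \<open>uw\<close> as
  well destroys \<open>D\<close>, so the domination number of \<open>G - v\<close> rises and that of \<open>G\<close> with it.\<close>

lemma dominating_refl: "dominating V E V"
  unfolding dominating_def by auto

lemma dominating_mono: "dominating V E D \<Longrightarrow> E \<subseteq> E' \<Longrightarrow> dominating V E' D"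
  unfolding dominating_def by blast

lemma domination_number_le_card: "dominating V E D \<Longrightarrow> domination_number V E \<le> card D"
  unfolding domination_number_def by (rule Least_le) auto

lemma ex_minimum_dominating_set: "\<exists>D. dominating V E D \<and> card D = domination_number V E"
  unfolding domination_number_def
  by (rule LeastI[of _ "card V"]) (use dominating_refl in auto)

lemma domination_number_antimono:
  assumes "E \<subseteq> E'"
  shows "domination_number V E' \<le> domination_number V E"
proof -
  obtain D where "dominating V E D" "card D = domination_number V E"
    using ex_minimum_dominating_set by blast
  then have "domination_number V E' \<le> card D"
    using assms by (blast intro: domination_number_le_card dominating_mono)
  with \<open>card D = domination_number V E\<close> show ?thesis
    by simp
qed

lemma dominating_isolated_vertex_iff:
  assumes "v \<in> V" and "\<forall>e\<in>E. v \<notin> e"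
  shows "dominating V E S \<longleftrightarrow> v \<in> S \<and> dominating (V - {v}) E (S - {v})"
  using assms unfolding dominating_def by (auto 4 3)

lemma domination_number_isolated_vertex:
  assumes "finite V" and "v \<in> V" and isolated: "\<forall>e\<in>E. v \<notin> e"
  shows "domination_number V E = domination_number (V - {v}) E + 1"
proof (rule antisym)
  obtain D where D: "dominating (V - {v}) E D" "card D = domination_number (V - {v}) E"
    using ex_minimum_dominating_set by blast
  have "D \<subseteq> V - {v}"
    using D(1) unfolding dominating_def by blast
  then have "v \<notin> D" and "finite D"
    using \<open>finite V\<close> by (auto simp: finite_subset)
  then have "dominating V E (insert v D)" and "card (insert v D) = card D + 1"
    using D(1) dominating_isolated_vertex_iff[OF \<open>v \<in> V\<close> isolated] by simp_all
  then show "domination_number V E \<le> domination_number (V - {v}) E + 1"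
    using D(2) domination_number_le_card by metis
next
  obtain S where S: "dominating V E S" "card S = domination_number V E"
    using ex_minimum_dominating_set by blast
  then have "v \<in> S" and "dominating (V - {v}) E (S - {v})"
    using dominating_isolated_vertex_iff[OF \<open>v \<in> V\<close> isolated] by auto
  moreover have "finite S"
    using S(1) \<open>finite V\<close> unfolding dominating_def by (auto simp: finite_subset)
  ultimately have "card S = card (S - {v}) + 1"
    using card_Suc_Diff1 by fastforce
  moreover have "domination_number (V - {v}) E \<le> card (S - {v})"
    using \<open>dominating (V - {v}) E (S - {v})\<close> by (rule domination_number_le_card)
  ultimately show "domination_number (V - {v}) E + 1 \<le> domination_number V E"
    using S(2) by linarith
qed

lemma gamma_sets_eq_vertex_set:
  assumes "finite V" and "card V \<le> domination_number V E"
  shows "gamma_sets V E = {V}"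
proof -
  have "domination_number V E = card V"
    using assms(2) domination_number_le_card[OF dominating_refl[of V E]] by linarith
  moreover have "D = V" if "dominating V E D" "card D = card V" for D
    using that \<open>finite V\<close> unfolding dominating_def by (simp add: card_subset_eq)
  ultimately show ?thesis
    unfolding gamma_sets_def using dominating_refl[of V E] by auto
qed

text \<open>If some \<open>u \<in> D\<close> had no private neighbour, exchanging \<open>u\<close> for any neighbour
  \<open>w\<^sub>0 \<notin> D\<close> of \<open>u\<close> would give a second \<open>\<gamma>\<close>-set.\<close>

lemma unique_gamma_set_private_neighbour:
  assumes "finite V" and unique: "gamma_sets V E = {D}"
    and "u \<in> D" and w\<^sub>0: "w\<^sub>0 \<in> V - D" "{u, w\<^sub>0} \<in> E"
  shows "\<exists>w\<in>V - D. {u, w} \<in> E \<and> (\<forall>y\<in>D. {y, w} \<in> E \<longrightarrow> y = u)"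
proof (rule ccontr)
  assume no_private: "\<not> ?thesis"
  have D: "dominating V E D" "card D = domination_number V E"
    using unique unfolding gamma_sets_def by auto
  have "finite D"
    using D(1) \<open>finite V\<close> unfolding dominating_def by (auto simp: finite_subset)
  define D' where "D' = insert w\<^sub>0 (D - {u})"
  have "dominating V E D'"
    unfolding dominating_def
  proof (intro conjI ballI)
    show "D' \<subseteq> V"
      using D(1) w\<^sub>0 unfolding dominating_def D'_def by blast
  next
    fix x assume x: "x \<in> V - D'"
    show "\<exists>y\<in>D'. {y, x} \<in> E"
    proof (cases "x = u")
      case True
      have "{w\<^sub>0, u} \<in> E"
        using w\<^sub>0(2) by (simp add: insert_commute)
      then show ?thesis
        using True unfolding D'_def by blast
    next
      case False
      then have "x \<in> V - D"
        using x unfolding D'_def by auto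
      then obtain y where "y \<in> D" "{y, x} \<in> E"
        using D(1) unfolding dominating_def by blast
      then have "\<exists>y\<in>D - {u}. {y, x} \<in> E"
        using no_private \<open>x \<in> V - D\<close> by blast
      then show ?thesis
        unfolding D'_def by blast
    qed
  qed
  moreover have "card D' = card D"
  proof -
    have "card D' = Suc (card (D - {u}))"
      using \<open>finite D\<close> w\<^sub>0(1) unfolding D'_def by simp
    also have "\<dots> = card D"
      using \<open>finite D\<close> \<open>u \<in> D\<close> by (rule card_Suc_Diff1)
    finally show ?thesis .
  qed
  ultimately have "D' \<in> gamma_sets V E"
    using D(2) unfolding gamma_sets_def by simp
  moreover have "D' \<noteq> D"
    using w\<^sub>0(1) unfolding D'_def by blast
  ultimately show False
    using unique by blast
qed

lemma domination_number_less_of_unique_gamma_set: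
  assumes unique: "gamma_sets V E = {D}"
    and "E' \<subseteq> E" and "\<not> dominating V E' D"
  shows "domination_number V E < domination_number V E'"
proof -
  obtain S where S: "dominating V E' S" "card S = domination_number V E'"
    using ex_minimum_dominating_set by blast
  then have "S \<noteq> D"
    using assms(3) by blast
  then have "S \<notin> gamma_sets V E"
    using unique by blast
  moreover have "dominating V E S"
    using S(1) \<open>E' \<subseteq> E\<close> dominating_mono by blast
  ultimately show ?thesis
    using S(2) domination_number_antimono[OF \<open>E' \<subseteq> E\<close>, of V]
    unfolding gamma_sets_def by auto
qed

lemma unique_gamma_set_edge_critical:
  assumes "finite V" and unique: "gamma_sets V E = {D}" and "D \<noteq> V"
  shows "\<exists>e\<in>E. domination_number V E < domination_number V (E - {e})"
proof -
  have D: "dominating V E D"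
    using unique unfolding gamma_sets_def by auto
  with \<open>D \<noteq> V\<close> obtain w\<^sub>0 where "w\<^sub>0 \<in> V - D"
    unfolding dominating_def by blast
  then obtain u where "u \<in> D" "{u, w\<^sub>0} \<in> E"
    using D unfolding dominating_def by blast
  then obtain w where w: "w \<in> V - D" "{u, w} \<in> E"
    and only_u: "\<forall>y\<in>D. {y, w} \<in> E \<longrightarrow> y = u"
    using unique_gamma_set_private_neighbour[OF \<open>finite V\<close> unique] \<open>w\<^sub>0 \<in> V - D\<close> by blast
  have "\<not> dominating V (E - {{u, w}}) D"
  proof
    assume "dominating V (E - {{u, w}}) D"
    then obtain y where "y \<in> D" "{y, w} \<in> E - {{u, w}}"
      using w(1) unfolding dominating_def by blast
    then show False
      using only_u by blast
  qed
  then have "domination_number V E < domination_number V (E - {{u, w}})"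
    by (rule domination_number_less_of_unique_gamma_set[OF unique Diff_subset])
  with w(2) show ?thesis
    by blast
qed

lemma bondage_number_le_card:
  "F \<subseteq> E \<Longrightarrow> domination_number V E < domination_number V (E - F) \<Longrightarrow> bondage_number V E \<le> card F"
  unfolding bondage_number_def by (rule Least_le) auto

lemma bondage_number_le_degree_plus_one:
  assumes "finite V" and "v \<in> V"
    and unique: "gamma_sets (V - {v}) {e\<in>E. v \<notin> e} = {D}"
    and less_card: "domination_number V E < card V"
  shows "bondage_number V E \<le> degree E v + 1"
proof -
  define E\<^sub>v where "E\<^sub>v = {e\<in>E. v \<in> e}"
  define H where "H = {e\<in>E. v \<notin> e}"
  have "E - E\<^sub>v = H" and "E\<^sub>v \<subseteq> E" and "card E\<^sub>v = degree E v"
    unfolding E\<^sub>v_def H_def degree_def by auto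
  have unique_H: "gamma_sets (V - {v}) H = {D}"
    using unique unfolding H_def .
  then have D: "dominating (V - {v}) H D" "card D = domination_number (V - {v}) H"
    unfolding gamma_sets_def by auto
  have isolated: "\<forall>e\<in>H'. v \<notin> e" if "H' \<subseteq> H" for H'
    using that unfolding H_def by blast
  have "domination_number V H = card D + 1"
    using domination_number_isolated_vertex[OF \<open>finite V\<close> \<open>v \<in> V\<close> isolated[OF order_refl]] D(2)
    by simp
  moreover have "domination_number V E \<le> domination_number V H"
    unfolding H_def by (rule domination_number_antimono) blast
  ultimately consider (loose) "domination_number V E < domination_number V H"
    | (tight) "domination_number V E = card D + 1"
    by linarith
  then show ?thesis
  proof cases
    case loose
    then have "bondage_number V E \<le> card E\<^sub>v"
      using bondage_number_le_card[OF \<open>E\<^sub>v \<subseteq> E\<close>] \<open>E - E\<^sub>v = H\<close> by simp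
    then show ?thesis
      using \<open>card E\<^sub>v = degree E v\<close> by simp
  next
    case tight
    have "card (V - {v}) + 1 = card V"
      using card_Suc_Diff1[OF \<open>finite V\<close> \<open>v \<in> V\<close>] by simp
    then have "D \<noteq> V - {v}"
      using tight less_card by auto
    then obtain e where "e \<in> H" and e: "card D < domination_number (V - {v}) (H - {e})"
      using unique_gamma_set_edge_critical[OF finite_Diff[OF \<open>finite V\<close>] unique_H] D(2) by auto
    define F where "F = insert e E\<^sub>v"
    have "E - F = H - {e}" and "F \<subseteq> E"
      using \<open>E - E\<^sub>v = H\<close> \<open>E\<^sub>v \<subseteq> E\<close> \<open>e \<in> H\<close> unfolding F_def H_def by auto
    have "domination_number V (H - {e}) = domination_number (V - {v}) (H - {e}) + 1"
      by (rule domination_number_isolated_vertex[OF \<open>finite V\<close> \<open>v \<in> V\<close> isolated[OF Diff_subset]])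
    with e have "domination_number V E < domination_number V (E - F)"
      using tight \<open>E - F = H - {e}\<close> by simp
    then have "bondage_number V E \<le> card F"
      by (rule bondage_number_le_card[OF \<open>F \<subseteq> E\<close>])
    also have "\<dots> \<le> card E\<^sub>v + 1"
      unfolding F_def by (cases "finite E\<^sub>v") (auto simp: card_insert_if)
    finally show ?thesis
      using \<open>card E\<^sub>v = degree E v\<close> by simp
  qed
qed

theorem theorem3p7:
  fixes V :: "'a set" and E :: "'a set set"
  assumes "simple_graph V E"
    and "hypo_unique_domination V E"
  shows "bondage_number V E \<le> min_degree V E + 1"
proof -
  have "finite V"
    using assms(1) unfolding simple_graph_def by blast
  have two_gamma_sets: "2 \<le> card (gamma_sets V E)"
    and unique: "\<forall>v\<in>V. card (gamma_sets (V - {v}) {e\<in>E. v \<notin> e}) = 1"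
    using assms(2) unfolding hypo_unique_domination_def delete_vertex_def by simp_all
  have "domination_number V E < card V"
  proof (rule ccontr)
    assume "\<not> domination_number V E < card V"
    then have "gamma_sets V E = {V}"
      using \<open>finite V\<close> by (simp add: gamma_sets_eq_vertex_set)
    with two_gamma_sets show False
      by simp
  qed
  then have "Min (degree E ` V) \<in> degree E ` V"
    using \<open>finite V\<close> by (intro Min_in) auto
  then obtain v where "v \<in> V" and v_min: "degree E v = min_degree V E"
    unfolding min_degree_def by force
  obtain D where "gamma_sets (V - {v}) {e\<in>E. v \<notin> e} = {D}"
    using unique \<open>v \<in> V\<close> card_1_singletonE by blast
  from bondage_number_le_degree_plus_one[OF \<open>finite V\<close> \<open>v \<in> V\<close> this
      \<open>domination_number V E < card V\<close>]
  show ?thesis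
    using v_min by simp
qed

end
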